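(* Let $n$ be a positive integer and $\pi\in S(\mathbb{Z}_n)$. Then $x\mapsto\pi(x)+x$ is a permutation of $\mathbb{Z}_n$ if and only if for no $k\in\mathbb{Z}_n$ does the cycle decomposition of $x\mapsto\pi(x+k)$ contain a cycle of length $2$.
   Context: $S(\mathbb{Z}_n)$ denotes the set of bijections $\mathbb{Z}_n\to\mathbb{Z}_n$. *)

theory Defs
  imports Main
begin

text \<open>Z_n is modelled by the carrier {..<n} of naturals with addition mod n.
  A permutation sigma of a set A has a cycle of length 2 in its cycle decomposition
  iff some element x of A satisfies sigma x \<noteq> x and sigma (sigma x) = x.\<close>

definition has_2cycle :: "(nat \<Rightarrow> nat) \<Rightarrow> nat set \<Rightarrow> bool" where
  "has_2cycle \<sigma> A \<longleftrightarrow> (\<exists>x\<in>A. \<sigma> x \<noteq> x \<and> \<sigma> (\<sigma> x) = x)"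

end

theory Submission
  imports Defs "HOL-Number_Theory.Cong"
begin

text \<open>A 2-cycle z \<mapsto> w \<mapsto> z of x \<mapsto> \<pi>(x + k) says \<pi>(z + k) = w and \<pi>(w + k) = z,
  so x = z + k and y = w + k are distinct points with \<pi> x + x = z + w + k = \<pi> y + y.
  Conversely, a collision \<pi> x + x = \<pi> y + y with x \<noteq> y yields the 2-cycle
  \<pi> y \<mapsto> \<pi> x \<mapsto> \<pi> y of x \<mapsto> \<pi>(x + k) for k = y - \<pi> x. Hence x \<mapsto> \<pi> x + x is injective,
  i.e. a permutation of the finite set Z_n, iff no shift has a 2-cycle.\<close>

lemma bij_betw_endo_iff_inj_on:
  assumes "finite A" and "f ` A \<subseteq> A"
  shows "bij_betw f A A \<longleftrightarrow> inj_on f A"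
  using assms endo_inj_surj by (metis bij_betw_def)

lemma ex_cong_add_lessThan:
  fixes b c n :: nat
  assumes "n > 0"
  obtains k where "k < n" and "[b + k = c] (mod n)"
proof
  show "(c + n - b mod n) mod n < n" using assms by simp
  have "b + (c + n - b mod n) = (b - b mod n) + (c + n)"
    using assms mod_less_eq_dividend[of b n] mod_less_divisor[of n b] by linarith
  then show "[b + (c + n - b mod n) mod n = c] (mod n)"
    by (simp add: cong_def mod_add_right_eq minus_mod_eq_mult_div)
qed

lemma has_2cycle_shift_imp_not_inj:
  fixes \<pi> :: "nat \<Rightarrow> nat"
  assumes "n > 0" and "has_2cycle (\<lambda>x. \<pi> ((x + k) mod n)) {..<n}"
  shows "\<not> inj_on (\<lambda>x. (\<pi> x + x) mod n) {..<n}"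
proof
  assume inj: "inj_on (\<lambda>x. (\<pi> x + x) mod n) {..<n}"
  from assms(2) obtain z where
    moved: "\<pi> ((z + k) mod n) \<noteq> z" and returns: "\<pi> ((\<pi> ((z + k) mod n) + k) mod n) = z"
    by (auto simp: has_2cycle_def)
  define x where "x = (z + k) mod n"
  define y where "y = (\<pi> x + k) mod n"
  have "x < n" "y < n" using assms(1) by (simp_all add: x_def y_def)
  have "\<pi> y = z" using returns by (simp add: x_def y_def)
  then have "x \<noteq> y" using moved x_def by auto
  have "(\<pi> x + x) mod n = (\<pi> x + z + k) mod n"
    by (simp add: x_def mod_add_right_eq add.assoc)
  also have "\<dots> = (z + (\<pi> x + k) mod n) mod n"
    by (simp add: mod_add_right_eq algebra_simps)
  also have "\<dots> = (\<pi> y + y) mod n"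
    by (simp add: \<open>\<pi> y = z\<close> flip: y_def)
  finally show False
    using inj \<open>x < n\<close> \<open>y < n\<close> \<open>x \<noteq> y\<close> by (auto dest: inj_onD)
qed

lemma not_inj_imp_has_2cycle_shift:
  fixes \<pi> :: "nat \<Rightarrow> nat"
  assumes "inj_on \<pi> {..<n}" and "\<pi> ` {..<n} \<subseteq> {..<n}"
    and "\<not> inj_on (\<lambda>x. (\<pi> x + x) mod n) {..<n}"
  obtains k where "k < n" and "has_2cycle (\<lambda>x. \<pi> ((x + k) mod n)) {..<n}"
proof -
  from assms(3) obtain x y where "x < n" "y < n" "x \<noteq> y"
    and collision: "[\<pi> x + x = \<pi> y + y] (mod n)"
    by (auto simp: inj_on_def cong_def)
  have "\<pi> x \<noteq> \<pi> y" "\<pi> y < n"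
    using assms(1,2) \<open>x < n\<close> \<open>y < n\<close> \<open>x \<noteq> y\<close> by (auto dest: inj_onD)
  obtain k where "k < n" and shift: "[\<pi> x + k = y] (mod n)"
    using ex_cong_add_lessThan[of n] \<open>x < n\<close> by auto
  have "[\<pi> x + (\<pi> y + k) = \<pi> x + x] (mod n)"
  proof -
    have "[\<pi> x + (\<pi> y + k) = \<pi> y + y] (mod n)"
      using shift cong_add_lcancel_nat[of "\<pi> y" "\<pi> x + k" y n] by (simp add: algebra_simps)
    then show ?thesis using collision cong_sym cong_trans by blast
  qed
  then have "[\<pi> y + k = x] (mod n)"
    by (simp only: cong_add_lcancel_nat)
  then have "(\<pi> y + k) mod n = x"
    using \<open>x < n\<close> by (simp add: cong_def)
  moreover have "(\<pi> x + k) mod n = y"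
    using shift \<open>y < n\<close> by (simp add: cong_def)
  ultimately have "has_2cycle (\<lambda>x. \<pi> ((x + k) mod n)) {..<n}"
    using \<open>\<pi> x \<noteq> \<pi> y\<close> \<open>\<pi> y < n\<close> by (auto simp: has_2cycle_def)
  with \<open>k < n\<close> show thesis by (rule that)
qed

theorem lemma2p5:
  fixes n :: nat and \<pi> :: "nat \<Rightarrow> nat"
  assumes "n > 0"
    and "bij_betw \<pi> {..<n} {..<n}"
  shows "bij_betw (\<lambda>x. (\<pi> x + x) mod n) {..<n} {..<n} \<longleftrightarrow>
         (\<forall>k\<in>{..<n}. \<not> has_2cycle (\<lambda>x. \<pi> ((x + k) mod n)) {..<n})"
proof -
  have "bij_betw (\<lambda>x. (\<pi> x + x) mod n) {..<n} {..<n} \<longleftrightarrow> inj_on (\<lambda>x. (\<pi> x + x) mod n) {..<n}"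
    using assms(1) by (intro bij_betw_endo_iff_inj_on) auto
  also have "\<dots> \<longleftrightarrow> (\<forall>k\<in>{..<n}. \<not> has_2cycle (\<lambda>x. \<pi> ((x + k) mod n)) {..<n})"
  proof
    assume "inj_on (\<lambda>x. (\<pi> x + x) mod n) {..<n}"
    then show "\<forall>k\<in>{..<n}. \<not> has_2cycle (\<lambda>x. \<pi> ((x + k) mod n)) {..<n}"
      using has_2cycle_shift_imp_not_inj[OF assms(1)] by blast
  next
    assume no_2cycle: "\<forall>k\<in>{..<n}. \<not> has_2cycle (\<lambda>x. \<pi> ((x + k) mod n)) {..<n}"
    show "inj_on (\<lambda>x. (\<pi> x + x) mod n) {..<n}"
    proof (rule ccontr)
      assume "\<not> inj_on (\<lambda>x. (\<pi> x + x) mod n) {..<n}"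
      then obtain k where "k < n" "has_2cycle (\<lambda>x. \<pi> ((x + k) mod n)) {..<n}"
        using assms(2) by (auto simp: bij_betw_def elim: not_inj_imp_has_2cycle_shift)
      with no_2cycle show False by auto
    qed
  qed
  finally show ?thesis .
qed

end
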